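(* Fix $k\in[K]$, a joint law $P_{X,A}$ of $(x,A)$ under which $H_k$ is almost surely invertible and $\mathbb{E}(H_k^{-1})$ is finite, a positive definite $\Sigma\in\mathbb{R}^{K\times K}$, and $\sigma_{\max}>0$. Let $\mathcal{P}_k$ be the class of data-generating mechanisms in which $(x,A)\sim P_{X,A}$, $b^*\in\mathbb{R}^K$ is arbitrary, and for each $i$ with $\psi_i=k$, $y_i=(M_kb^* )_i+\epsilon_i$, where conditionally on $(x,A)$ the $\epsilon_i$ have mean zero, are uncorrelated, and satisfy $\mathbb{E}(\epsilon_i^2\mid x,A)\le\sigma_{\max}^2$. Then $$\inf_{\bar\beta}\ \sup_{\mathcal{P}_k}\ \mathbb{E}\big(\|\bar\beta-b^*\|_\Sigma^2\big)=\sigma_{\max}^2\,\mathrm{tr}\big(\Sigma\,\mathbb{E}(H_k^{-1})\big),$$ where the infimum is over all estimators $\bar\beta\in\mathbb{R}^K$ that are measurable functions of the data $(x,A,(y_i)_{i:\psi_i=k})$, and $\|v\|_\Sigma^2=v^\top\Sigma v$.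
   Context: Let $n\ge2$, $K\ge1$, $Z\in\{0,1\}^{n\times K}$ a community membership matrix (each row exactly one $1$), $\psi_i$ the community of node $i$. $A\in\{0,1\}^{n\times n}$ is a random symmetric adjacency matrix, $x\in\mathbb{R}^n$ a random covariate vector. $*$ is the Hadamard product, $1_n$ the all-ones vector. $M_k=\mathrm{diag}(Z_{\cdot,k})(1_nx^\top*A)Z\in\mathbb{R}^{n\times K}$ and $H_k=M_k^\top M_k$. *)

theory Defs
  imports "HOL-Probability.Probability"
begin

text \<open>Nodes are indexed by a finite type 'n (n = CARD('n)), communities by a finite
type 'k (K = CARD('k)).  The membership matrix Z is determined by the community
map psi : 'n => 'k (row i of Z has its single 1 in column psi i).\<close>

definition Zmat :: "('n \<Rightarrow> 'k) \<Rightarrow> real^'k^'n" where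
  "Zmat psi = (\<chi> i l. if psi i = l then 1 else 0)"

definition diag_vec :: "real^'n \<Rightarrow> real^'n^'n" where
  "diag_vec v = (\<chi> i j. if i = j then v $ i else 0)"

definition hadamard :: "real^'b^'a \<Rightarrow> real^'b^'a \<Rightarrow> real^'b^'a" where
  "hadamard P Q = (\<chi> i j. P $ i $ j * Q $ i $ j)"

definition outer :: "real^'a \<Rightarrow> real^'b \<Rightarrow> real^'b^'a" where
  "outer u v = (\<chi> i j. u $ i * v $ j)"

definition Mmat :: "('n \<Rightarrow> 'k) \<Rightarrow> 'k \<Rightarrow> real^'n \<Rightarrow> real^'n^'n \<Rightarrow> real^'k^'n" where
  "Mmat psi k x A =
     diag_vec (column k (Zmat psi)) ** hadamard (outer (\<chi> i. 1) x) A ** Zmat psi"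

definition Hmat :: "('n \<Rightarrow> 'k) \<Rightarrow> 'k \<Rightarrow> real^'n \<Rightarrow> real^'n^'n \<Rightarrow> real^'k^'k" where
  "Hmat psi k x A = transpose (Mmat psi k x A) ** Mmat psi k x A"

definition pos_def :: "real^'k^'k \<Rightarrow> bool" where
  "pos_def S \<longleftrightarrow> transpose S = S \<and> (\<forall>v. v \<noteq> 0 \<longrightarrow> v \<bullet> (S *v v) > 0)"

definition sqnorm_S :: "real^'k^'k \<Rightarrow> real^'k \<Rightarrow> real" where
  "sqnorm_S S v = v \<bullet> (S *v v)"

text \<open>Observed responses: only the coordinates y_i with psi i = k are observed;
the others are masked to 0 (so an estimator can only depend on (y_i)_{psi_i = k}).\<close>
definition mask :: "('n \<Rightarrow> 'k) \<Rightarrow> 'k \<Rightarrow> real^'n \<Rightarrow> real^'n" where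
  "mask psi k y = (\<chi> i. if psi i = k then y $ i else 0)"

definition mat_expect :: "'a measure \<Rightarrow> ('a \<Rightarrow> real^'k^'k) \<Rightarrow> real^'k^'k" where
  "mat_expect P F = (\<chi> i j. integral\<^sup>L P (\<lambda>w. F w $ i $ j))"

definition noise_ok ::
  "((real^'n) \<times> (real^'n^'n)) measure \<Rightarrow> ('n \<Rightarrow> 'k) \<Rightarrow> 'k \<Rightarrow> real
     \<Rightarrow> ((real^'n) \<times> (real^'n^'n) \<Rightarrow> (real^'n) measure) \<Rightarrow> bool" where
  "noise_ok P psi k \<sigma> \<kappa> \<longleftrightarrow>
     \<kappa> \<in> P \<rightarrow>\<^sub>M subprob_algebra borel \<and>
     (AE w in P. prob_space (\<kappa> w) \<and>
        (\<forall>i. psi i = k \<longrightarrow>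
            integrable (\<kappa> w) (\<lambda>e. (e $ i)\<^sup>2) \<and>
            integral\<^sup>L (\<kappa> w) (\<lambda>e. e $ i) = 0 \<and>
            integral\<^sup>L (\<kappa> w) (\<lambda>e. (e $ i)\<^sup>2) \<le> \<sigma>\<^sup>2) \<and>
        (\<forall>i j. psi i = k \<longrightarrow> psi j = k \<longrightarrow> i \<noteq> j \<longrightarrow>
            integral\<^sup>L (\<kappa> w) (\<lambda>e. e $ i * e $ j) = 0))"

definition risk ::
  "((real^'n) \<times> (real^'n^'n)) measure \<Rightarrow> ('n \<Rightarrow> 'k) \<Rightarrow> 'k \<Rightarrow> real^'k^'k
     \<Rightarrow> ((real^'n) \<times> (real^'n^'n) \<times> (real^'n) \<Rightarrow> real^'k)
     \<Rightarrow> real^'k \<Rightarrow> ((real^'n) \<times> (real^'n^'n) \<Rightarrow> (real^'n) measure) \<Rightarrow> ennreal" where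
  "risk P psi k S est b \<kappa> =
     (\<integral>\<^sup>+ w. (\<integral>\<^sup>+ e. ennreal (sqnorm_S S
          (est (fst w, snd w, mask psi k (Mmat psi k (fst w) (snd w) *v b + e)) - b))
        \<partial>(\<kappa> w)) \<partial>P)"

end

theory Submission
  imports Defs
begin

text \<open>Upper bound: where H is invertible, the least-squares estimate lsq(M) y has error
lsq(M) \<epsilon>, so for uncorrelated noise its conditional \<Sigma>-risk is sum_i C_ii E \<epsilon>_i^2 \<le> \<sigma>^2 tr C,
where C = lsq(M)^T \<Sigma> lsq(M) and tr C = tr(\<Sigma> H^-1).

Lower bound: let R = I - 2 M lsq(M) be the reflection in the column space of M. The noise equal
to \<plusminus>\<sigma>\<surd>n e_J or \<plusminus>\<sigma>\<surd>n R e_J, each with probability 1/(4n), is admissible because R R^T = I.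
As M b + R v = M (b - 2 lsq(M) v) + v, the data under (b, R v) and under (b - 2 lsq(M) v, v)
coincide, so every estimator pays at least 2 \<parallel>lsq(M) v\<parallel>_\<Sigma>^2 on the pair. Averaging b over the
cube [-T,T]^K, which the shift barely moves once T is large, shows that the worst-case risk is
at least \<sigma>^2 E tr(\<Sigma> H^-1).\<close>

section \<open>Least squares\<close>

lemma matrix_inv_cancel:
  fixes A :: "'a::semiring_1^'n^'m"
  assumes "invertible A"
  shows "A ** matrix_inv A = mat 1" "matrix_inv A ** A = mat 1"
proof -
  have "A ** matrix_inv A = mat 1 \<and> matrix_inv A ** A = mat 1"
    using assms unfolding invertible_def matrix_inv_def by (rule someI_ex)
  then show "A ** matrix_inv A = mat 1" "matrix_inv A ** A = mat 1" by auto
qed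

lemma symmetric_matrix_inv:
  fixes H :: "'a::comm_semiring_1^'n^'n"
  assumes "invertible H" "transpose H = H"
  shows "transpose (matrix_inv H) = matrix_inv H"
proof -
  let ?G = "matrix_inv H"
  have "transpose ?G ** H = mat 1"
    by (metis assms(2) matrix_inv_cancel(1)[OF assms(1)] matrix_transpose_mul transpose_mat)
  then have "transpose ?G = transpose ?G ** (H ** ?G)"
    by (simp add: matrix_inv_cancel[OF assms(1)])
  also have "\<dots> = (transpose ?G ** H) ** ?G" by (simp add: matrix_mul_assoc)
  also have "\<dots> = ?G" using \<open>transpose ?G ** H = mat 1\<close> by simp
  finally show ?thesis .
qed

definition lsq :: "real^'k^'n \<Rightarrow> real^'n^'k" where
  "lsq M = matrix_inv (transpose M ** M) ** transpose M"

definition lsq_loss_matrix :: "real^'k^'k \<Rightarrow> real^'k^'n \<Rightarrow> real^'n^'n" where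
  "lsq_loss_matrix S M = transpose (lsq M) ** S ** lsq M"

lemma lsq_mult_self:
  assumes "invertible (transpose M ** M)"
  shows "lsq M ** M = mat 1"
  using matrix_inv_cancel(2)[OF assms] by (simp add: lsq_def matrix_mul_assoc)

lemma lsq_mult_transpose:
  assumes "invertible (transpose M ** M)"
  shows "lsq M ** transpose (lsq M) = matrix_inv (transpose M ** M)"
proof -
  let ?G = "matrix_inv (transpose M ** M)"
  have "transpose ?G = ?G"
    using symmetric_matrix_inv[OF assms] by (simp add: matrix_transpose_mul)
  then have "lsq M ** transpose (lsq M) = ?G ** (transpose M ** M) ** ?G"
    by (simp add: lsq_def matrix_transpose_mul matrix_mul_assoc)
  then show ?thesis using matrix_inv_cancel(2)[OF assms] by simp
qed

lemma trace_lsq_loss_matrix: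
  assumes "invertible (transpose M ** M)"
  shows "trace (lsq_loss_matrix S M) = trace (S ** matrix_inv (transpose M ** M))"
proof -
  have "trace (lsq_loss_matrix S M) = trace (lsq M ** (transpose (lsq M) ** S))"
    unfolding lsq_loss_matrix_def by (rule trace_mul_sym)
  also have "\<dots> = trace ((lsq M ** transpose (lsq M)) ** S)"
    by (simp add: matrix_mul_assoc)
  also have "\<dots> = trace (S ** (lsq M ** transpose (lsq M)))"
    by (rule trace_mul_sym)
  finally show ?thesis using lsq_mult_transpose[OF assms] by simp
qed

lemma lsq_column_zero:
  assumes "M $ i = 0" shows "lsq M $ a $ i = 0"
  using assms by (simp add: lsq_def matrix_matrix_mult_def transpose_def vec_eq_iff)

lemma lsq_loss_matrix_zero:
  assumes "M $ i = 0"
  shows "lsq_loss_matrix S M $ i $ j = 0" "lsq_loss_matrix S M $ j $ i = 0"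
  using lsq_column_zero[OF assms]
  by (simp_all add: lsq_loss_matrix_def matrix_matrix_mult_def transpose_def)

lemma sqnorm_S_nonneg: "pos_def S \<Longrightarrow> sqnorm_S S v \<ge> 0"
  unfolding pos_def_def sqnorm_S_def by (cases "v = 0") (auto intro: less_imp_le)

lemma sqnorm_S_lsq: "sqnorm_S S (lsq M *v e) = e \<bullet> (lsq_loss_matrix S M *v e)"
  unfolding sqnorm_S_def lsq_loss_matrix_def
  by (metis dot_lmul_matrix inner_commute matrix_vector_mul_assoc transpose_matrix_vector)

lemma sqnorm_S_lsq_axis:
  "sqnorm_S S (lsq M *v (s *\<^sub>R axis J 1)) = s\<^sup>2 * lsq_loss_matrix S M $ J $ J"
proof -
  let ?C = "lsq_loss_matrix S M"
  have "sqnorm_S S (lsq M *v (s *\<^sub>R axis J 1)) = (s *\<^sub>R axis J 1) \<bullet> (?C *v (s *\<^sub>R axis J 1))"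
    by (rule sqnorm_S_lsq)
  also have "\<dots> = s\<^sup>2 * (?C *v axis J 1) $ J"
    by (simp add: matrix_vector_mult_scaleR inner_axis' power2_eq_square)
  finally show ?thesis by (simp add: matrix_vector_mult_basis column_def)
qed

lemma lsq_loss_matrix_diag_nonneg:
  assumes "pos_def S" shows "lsq_loss_matrix S M $ i $ i \<ge> 0"
  using sqnorm_S_nonneg[OF assms, of "lsq M *v (1 *\<^sub>R axis i 1)"] sqnorm_S_lsq_axis[of S M 1 i]
  by simp

lemma trace_lsq_loss_matrix_nonneg: "pos_def S \<Longrightarrow> trace (lsq_loss_matrix S M) \<ge> 0"
  unfolding trace_def by (intro sum_nonneg lsq_loss_matrix_diag_nonneg)

lemma quadratic_form_expand: "e \<bullet> (C *v e) = (\<Sum>i\<in>UNIV. \<Sum>j\<in>UNIV. e $ i * e $ j * C $ i $ j)"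
  by (simp add: inner_vec_def matrix_vector_mult_def sum_distrib_left mult_ac)

lemma sqnorm_S_parallelogram:
  "sqnorm_S S x + sqnorm_S S (x - 2 *\<^sub>R \<xi>) = 2 * sqnorm_S S \<xi> + 2 * sqnorm_S S (x - \<xi>)"
  unfolding sqnorm_S_def
  by (simp add: matrix_vector_mult_diff_distrib matrix_vector_mult_scaleR inner_diff_left
      inner_diff_right)

definition reflection :: "real^'k^'n \<Rightarrow> real^'n^'n" where
  "reflection M = mat 1 - 2 *\<^sub>R (M ** lsq M)"

lemma reflection_mult_vector: "reflection M *v v = v - 2 *\<^sub>R (M *v (lsq M *v v))"
  by (simp add: reflection_def matrix_vector_mult_diff_rdistrib matrix_vector_mul_assoc
      flip: scaleR_matrix_vector_assoc)

lemma reflection_shift: "M *v b + reflection M *v v = M *v (b - 2 *\<^sub>R (lsq M *v v)) + v"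
  by (simp add: reflection_mult_vector matrix_vector_mult_diff_distrib matrix_vector_mult_scaleR)

lemma transpose_reflection:
  assumes "invertible (transpose M ** M)"
  shows "transpose (reflection M) = reflection M"
proof -
  have "transpose (matrix_inv (transpose M ** M)) = matrix_inv (transpose M ** M)"
    using symmetric_matrix_inv[OF assms] by (simp add: matrix_transpose_mul)
  then have "transpose (M ** lsq M) = M ** lsq M"
    by (simp add: lsq_def matrix_transpose_mul matrix_mul_assoc)
  then show ?thesis by (simp add: reflection_def transpose_def vec_eq_iff mat_def)
qed

lemma reflection_involutive:
  assumes "invertible (transpose M ** M)"
  shows "reflection M *v (reflection M *v v) = v"
proof -
  let ?u = "lsq M *v v"
  have "lsq M *v (M *v u) = u" for u
    using lsq_mult_self[OF assms] by (simp add: matrix_vector_mul_assoc)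
  then have lsq_reflection: "lsq M *v (reflection M *v v) = ?u - 2 *\<^sub>R ?u"
    by (simp add: reflection_mult_vector matrix_vector_mult_diff_distrib matrix_vector_mult_scaleR)
  have "reflection M *v (reflection M *v v) =
      reflection M *v v - 2 *\<^sub>R (M *v (lsq M *v (reflection M *v v)))"
    by (rule reflection_mult_vector)
  also have "\<dots> = (v - 2 *\<^sub>R (M *v ?u)) - 2 *\<^sub>R (M *v (?u - 2 *\<^sub>R ?u))"
    by (subst lsq_reflection) (simp only: reflection_mult_vector[of M v])
  also have "\<dots> = v"
    by (simp add: matrix_vector_mult_diff_distrib matrix_vector_mult_scaleR algebra_simps)
  finally show ?thesis .
qed

lemma reflection_orthogonal:
  assumes "invertible (transpose M ** M)"
  shows "reflection M ** transpose (reflection M) = mat 1"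
  by (simp add: transpose_reflection[OF assms] reflection_involutive[OF assms] matrix_eq
      flip: matrix_vector_mul_assoc)

lemma diag_vec_mult_nth: "(diag_vec d ** B) $ i $ j = d $ i * B $ i $ j"
proof -
  have "(diag_vec d ** B) $ i $ j = (\<Sum>l\<in>UNIV. (if i = l then d $ i else 0) * B $ l $ j)"
    by (simp add: matrix_matrix_mult_def diag_vec_def)
  also have "\<dots> = (\<Sum>l\<in>UNIV. if i = l then d $ i * B $ l $ j else 0)"
    by (rule sum.cong) auto
  finally show ?thesis by simp
qed

lemma Mmat_nth:
  "Mmat psi k x A $ i $ l =
     (if psi i = k then (\<Sum>j\<in>UNIV. if psi j = l then x $ j * A $ i $ j else 0) else 0)"
proof -
  have "Mmat psi k x A $ i $ l =
      (\<Sum>j\<in>UNIV. (diag_vec (column k (Zmat psi)) ** hadamard (outer (\<chi> i. 1) x) A) $ i $ j *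
         Zmat psi $ j $ l)"
    unfolding Mmat_def by (simp add: matrix_matrix_mult_def)
  also have "\<dots> = (\<Sum>j\<in>UNIV. (if psi i = k then 1 else 0) * (x $ j * A $ i $ j) *
                    (if psi j = l then 1 else 0))"
    by (simp add: diag_vec_mult_nth column_def Zmat_def hadamard_def outer_def)
  finally show ?thesis by (auto intro: sum.cong)
qed

lemma Mmat_row_zero: "psi i \<noteq> k \<Longrightarrow> Mmat psi k x A $ i = 0"
  by (simp add: vec_eq_iff Mmat_nth)

lemma lsq_Mmat_mask: "lsq (Mmat psi k x A) *v mask psi k y = lsq (Mmat psi k x A) *v y"
  unfolding vec_eq_iff matrix_vector_mult_def mask_def
  by (auto intro!: sum.cong simp: lsq_column_zero Mmat_row_zero)

lemma lsq_Mmat_error: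
  assumes "invertible (Hmat psi k x A)"
  shows "lsq (Mmat psi k x A) *v mask psi k (Mmat psi k x A *v b + e) - b =
         lsq (Mmat psi k x A) *v e"
  using lsq_mult_self[of "Mmat psi k x A"] assms
  by (simp add: Hmat_def lsq_Mmat_mask matrix_vector_right_distrib matrix_vector_mul_assoc)

lemma measurable_vec_nth [measurable (raw)]:
  fixes f :: "'a \<Rightarrow> 'b::euclidean_space^'n"
  assumes "f \<in> borel_measurable M"
  shows "(\<lambda>x. f x $ i) \<in> borel_measurable M"
proof -
  have "(\<lambda>x::'b^'n. x $ i) \<in> borel_measurable borel"
    by (intro borel_measurable_continuous_onI linear_continuous_on bounded_linear_vec_nth)
  from measurable_compose[OF assms this] show ?thesis by simp
qed

lemma borel_measurable_vec:
  fixes f :: "'a \<Rightarrow> 'b::euclidean_space^'n"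
  assumes "\<And>i. (\<lambda>x. f x $ i) \<in> borel_measurable M"
  shows "f \<in> borel_measurable M"
proof (subst borel_measurable_euclidean_space, intro ballI)
  fix b :: "'b^'n" assume "b \<in> Basis"
  then obtain i u where "b = axis i u" "u \<in> Basis" by (auto simp: Basis_vec_def)
  moreover have "(\<lambda>x. f x $ i \<bullet> u) \<in> borel_measurable M"
    using assms[of i] by measurable
  ultimately show "(\<lambda>x. f x \<bullet> b) \<in> borel_measurable M" by (simp add: inner_axis)
qed

lemma measurable_matrix_matrix_mult [measurable (raw)]:
  fixes A :: "'a \<Rightarrow> real^'m^'n" and B :: "'a \<Rightarrow> real^'p^'m"
  assumes "A \<in> borel_measurable M" "B \<in> borel_measurable M"
  shows "(\<lambda>x. A x ** B x) \<in> borel_measurable M"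
  by (intro borel_measurable_vec) (simp add: matrix_matrix_mult_def, use assms in measurable)

lemma measurable_matrix_vector_mult [measurable (raw)]:
  fixes A :: "'a \<Rightarrow> real^'m^'n" and v :: "'a \<Rightarrow> real^'m"
  assumes "A \<in> borel_measurable M" "v \<in> borel_measurable M"
  shows "(\<lambda>x. A x *v v x) \<in> borel_measurable M"
  by (intro borel_measurable_vec) (simp add: matrix_vector_mult_def, use assms in measurable)

lemma measurable_transpose [measurable (raw)]:
  fixes A :: "'a \<Rightarrow> real^'m^'n"
  assumes "A \<in> borel_measurable M"
  shows "(\<lambda>x. transpose (A x)) \<in> borel_measurable M"
  by (intro borel_measurable_vec) (simp add: transpose_def, use assms in measurable)

lemma measurable_trace [measurable (raw)]:
  fixes A :: "'a \<Rightarrow> real^'n^'n"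
  assumes "A \<in> borel_measurable M"
  shows "(\<lambda>x. trace (A x)) \<in> borel_measurable M"
  unfolding trace_def using assms by measurable

lemma measurable_mask [measurable (raw)]:
  assumes "f \<in> borel_measurable M"
  shows "(\<lambda>x. mask psi k (f x)) \<in> borel_measurable M"
  by (intro borel_measurable_vec) (simp add: mask_def, use assms in measurable)

lemma measurable_sqnorm_S [measurable (raw)]:
  assumes "f \<in> borel_measurable M"
  shows "(\<lambda>x. sqnorm_S S (f x)) \<in> borel_measurable M"
  unfolding sqnorm_S_def using assms by measurable

lemma measurable_fst_snd_borel [measurable (raw)]:
  fixes f :: "'a \<Rightarrow> 'b::second_countable_topology \<times> 'c::second_countable_topology"
  assumes "f \<in> borel_measurable M"
  shows "(\<lambda>x. fst (f x)) \<in> borel_measurable M" "(\<lambda>x. snd (f x)) \<in> borel_measurable M"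
  using assms by (simp_all add: borel_prod[symmetric] measurable_fst'' measurable_snd'')

lemma measurable_Mmat [measurable (raw)]:
  assumes "x \<in> borel_measurable M" "A \<in> borel_measurable M"
  shows "(\<lambda>w. Mmat psi k (x w) (A w)) \<in> borel_measurable M"
  by (intro borel_measurable_vec) (simp add: Mmat_nth, use assms in measurable)

section \<open>Risk of least squares under uncorrelated noise\<close>

lemma integrable_mult_of_squares:
  fixes N :: "(real^'n) measure"
  assumes "sets N = sets borel" "integrable N (\<lambda>e. (e $ i)\<^sup>2)" "integrable N (\<lambda>e. (e $ j)\<^sup>2)"
  shows "integrable N (\<lambda>e. e $ i * e $ j)"
proof (rule Bochner_Integration.integrable_bound[OF Bochner_Integration.integrable_add[OF assms(2,3)]])
  show "(\<lambda>e. e $ i * e $ j) \<in> borel_measurable N"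
    by (simp add: measurable_cong_sets[OF assms(1) refl])
  have "\<bar>a * b\<bar> \<le> a\<^sup>2 + b\<^sup>2" for a b :: real
  proof -
    have "\<bar>a * b\<bar> \<le> 2 * \<bar>a\<bar> * \<bar>b\<bar>" by (simp add: abs_mult)
    also have "\<dots> \<le> a\<^sup>2 + b\<^sup>2" using sum_squares_bound[of "\<bar>a\<bar>" "\<bar>b\<bar>"] by simp
    finally show ?thesis .
  qed
  then show "AE e in N. norm (e $ i * e $ j) \<le> norm ((e $ i)\<^sup>2 + (e $ j)\<^sup>2)"
    by simp
qed

lemma quadratic_form_restrict:
  fixes C :: "real^'n^'n"
  assumes "\<And>i j. i \<notin> K \<or> j \<notin> K \<Longrightarrow> C $ i $ j = 0"
  shows "e \<bullet> (C *v e) = (\<Sum>i\<in>K. \<Sum>j\<in>K. e $ i * e $ j * C $ i $ j)"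
proof -
  have "e \<bullet> (C *v e) = (\<Sum>i\<in>K. \<Sum>j\<in>UNIV. e $ i * e $ j * C $ i $ j)"
    unfolding quadratic_form_expand
    by (rule sum.mono_neutral_right) (auto intro!: sum.neutral simp: assms)
  also have "\<dots> = (\<Sum>i\<in>K. \<Sum>j\<in>K. e $ i * e $ j * C $ i $ j)"
    by (intro sum.cong refl sum.mono_neutral_right) (auto simp: assms)
  finally show ?thesis .
qed

lemma integral_quadratic_form_uncorrelated:
  fixes N :: "(real^'n) measure" and C :: "real^'n^'n"
  assumes N: "sets N = sets borel"
    and square_integrable: "\<And>i. i \<in> K \<Longrightarrow> integrable N (\<lambda>e. (e $ i)\<^sup>2)"
    and uncorrelated: "\<And>i j. i \<in> K \<Longrightarrow> j \<in> K \<Longrightarrow> i \<noteq> j \<Longrightarrow> integral\<^sup>L N (\<lambda>e. e $ i * e $ j) = 0"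
  shows "integrable N (\<lambda>e. \<Sum>i\<in>K. \<Sum>j\<in>K. e $ i * e $ j * C $ i $ j)"
    and "(\<integral> e. (\<Sum>i\<in>K. \<Sum>j\<in>K. e $ i * e $ j * C $ i $ j) \<partial>N) =
         (\<Sum>i\<in>K. C $ i $ i * integral\<^sup>L N (\<lambda>e. (e $ i)\<^sup>2))"
proof -
  have integrable_ij: "integrable N (\<lambda>e. e $ i * e $ j)" if "i \<in> K" "j \<in> K" for i j
    using square_integrable that by (intro integrable_mult_of_squares[OF N])
  then show "integrable N (\<lambda>e. \<Sum>i\<in>K. \<Sum>j\<in>K. e $ i * e $ j * C $ i $ j)"
    by (intro Bochner_Integration.integrable_sum integrable_mult_left)
  have "(\<integral> e. (\<Sum>i\<in>K. \<Sum>j\<in>K. e $ i * e $ j * C $ i $ j) \<partial>N) =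
      (\<Sum>i\<in>K. \<Sum>j\<in>K. C $ i $ j * integral\<^sup>L N (\<lambda>e. e $ i * e $ j))"
    by (simp add: Bochner_Integration.integral_sum integrable_mult_left integrable_ij mult.commute)
  also have "\<dots> = (\<Sum>i\<in>K. C $ i $ i * integral\<^sup>L N (\<lambda>e. (e $ i)\<^sup>2))"
  proof (rule sum.cong[OF refl])
    fix i assume "i \<in> K"
    then have "(\<Sum>j\<in>K. C $ i $ j * integral\<^sup>L N (\<lambda>e. e $ i * e $ j)) =
        (\<Sum>j\<in>K. if j = i then C $ i $ i * integral\<^sup>L N (\<lambda>e. (e $ i)\<^sup>2) else 0)"
      using uncorrelated by (intro sum.cong) (auto simp: power2_eq_square)
    then show "(\<Sum>j\<in>K. C $ i $ j * integral\<^sup>L N (\<lambda>e. e $ i * e $ j)) =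
        C $ i $ i * integral\<^sup>L N (\<lambda>e. (e $ i)\<^sup>2)"
      using \<open>i \<in> K\<close> by (simp add: sum.delta')
  qed
  finally show "(\<integral> e. (\<Sum>i\<in>K. \<Sum>j\<in>K. e $ i * e $ j * C $ i $ j) \<partial>N) =
      (\<Sum>i\<in>K. C $ i $ i * integral\<^sup>L N (\<lambda>e. (e $ i)\<^sup>2))" .
qed

lemma nn_integral_sqnorm_S_lsq_le:
  fixes N :: "(real^'n) measure"
  assumes N: "sets N = sets borel" and S: "pos_def S"
    and rows: "\<And>i. i \<notin> K \<Longrightarrow> M $ i = 0"
    and moments: "\<And>i. i \<in> K \<Longrightarrow> integrable N (\<lambda>e. (e $ i)\<^sup>2) \<and>
                   integral\<^sup>L N (\<lambda>e. (e $ i)\<^sup>2) \<le> \<sigma>\<^sup>2"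
    and uncorrelated: "\<And>i j. i \<in> K \<Longrightarrow> j \<in> K \<Longrightarrow> i \<noteq> j \<Longrightarrow> integral\<^sup>L N (\<lambda>e. e $ i * e $ j) = 0"
  shows "(\<integral>\<^sup>+ e. ennreal (sqnorm_S S (lsq M *v e)) \<partial>N) \<le> ennreal (\<sigma>\<^sup>2 * trace (lsq_loss_matrix S M))"
proof -
  define C where "C = lsq_loss_matrix S M"
  define f where "f e = (\<Sum>i\<in>K. \<Sum>j\<in>K. e $ i * e $ j * C $ i $ j)" for e :: "real^'n"
  have f_eq: "sqnorm_S S (lsq M *v e) = f e" for e
    unfolding sqnorm_S_lsq f_def C_def
    by (rule quadratic_form_restrict) (auto simp: lsq_loss_matrix_zero rows)
  have "i \<in> K \<Longrightarrow> integrable N (\<lambda>e. (e $ i)\<^sup>2)" for i using moments by blast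
  note f_integral = integral_quadratic_form_uncorrelated[where C=C, OF N this uncorrelated]
  have "integral\<^sup>L N f = (\<Sum>i\<in>K. C $ i $ i * integral\<^sup>L N (\<lambda>e. (e $ i)\<^sup>2))"
    unfolding f_def by (rule f_integral(2))
  also have "\<dots> \<le> (\<Sum>i\<in>K. C $ i $ i * \<sigma>\<^sup>2)"
    using moments lsq_loss_matrix_diag_nonneg[OF S] by (intro sum_mono mult_left_mono) (auto simp: C_def)
  also have "\<dots> \<le> (\<Sum>i\<in>UNIV. C $ i $ i * \<sigma>\<^sup>2)"
    by (intro sum_mono2) (auto simp: C_def lsq_loss_matrix_diag_nonneg[OF S])
  also have "\<dots> = \<sigma>\<^sup>2 * trace C" by (simp add: trace_def sum_distrib_left mult.commute)
  finally have "integral\<^sup>L N f \<le> \<sigma>\<^sup>2 * trace C" .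
  moreover have "(\<integral>\<^sup>+ e. ennreal (sqnorm_S S (lsq M *v e)) \<partial>N) = ennreal (integral\<^sup>L N f)"
    unfolding f_eq
  proof (rule nn_integral_eq_integral)
    show "integrable N f" unfolding f_def by (rule f_integral(1))
    show "AE e in N. 0 \<le> f e" using sqnorm_S_nonneg[OF S] f_eq by (metis AE_I2)
  qed
  ultimately show ?thesis by (simp add: C_def ennreal_leI)
qed

section \<open>The upper bound\<close>

locale regression_design =
  fixes P :: "((real^'n) \<times> (real^'n^'n)) measure"
    and psi :: "'n::finite \<Rightarrow> 'k::finite"
    and k :: 'k
    and \<Sigma> :: "real^'k^'k"
    and \<sigma>max :: real
  assumes P_prob: "prob_space P"
    and P_borel: "sets P = sets borel"
    and H_inv: "AE w in P. invertible (Hmat psi k (fst w) (snd w))"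
    and H_int: "\<And>i j. integrable P (\<lambda>w. matrix_inv (Hmat psi k (fst w) (snd w)) $ i $ j)"
    and Sig: "pos_def \<Sigma>"
begin

abbreviation worst_case_risk :: "((real^'n) \<times> (real^'n^'n) \<times> (real^'n) \<Rightarrow> real^'k) \<Rightarrow> ennreal" where
  "worst_case_risk est \<equiv>
     SUP (b, \<kappa>) \<in> {(b, \<kappa>). noise_ok P psi k \<sigma>max \<kappa>}. risk P psi k \<Sigma> est b \<kappa>"

abbreviation design :: "(real^'n) \<times> (real^'n^'n) \<Rightarrow> real^'k^'n" where
  "design w \<equiv> Mmat psi k (fst w) (snd w)"

definition gram_inv :: "(real^'n) \<times> (real^'n^'n) \<Rightarrow> real^'k^'k" where
  "gram_inv w = matrix_inv (Hmat psi k (fst w) (snd w))"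

lemma borel_measurable_gram_inv: "gram_inv \<in> borel_measurable borel"
proof (intro borel_measurable_vec)
  fix i j
  have "(\<lambda>w. gram_inv w $ i $ j) \<in> borel_measurable P"
    using H_int[of i j] unfolding gram_inv_def by (rule borel_measurable_integrable)
  then show "(\<lambda>w. gram_inv w $ i $ j) \<in> borel_measurable borel"
    by (simp add: measurable_cong_sets[OF P_borel refl])
qed

lemma measurable_gram_inv [measurable (raw)]:
  "f \<in> borel_measurable M \<Longrightarrow> (\<lambda>x. gram_inv (f x)) \<in> borel_measurable M"
  using measurable_compose[OF _ borel_measurable_gram_inv] by blast

lemma lsq_design: "lsq (design w) = gram_inv w ** transpose (design w)"
  by (simp add: lsq_def gram_inv_def Hmat_def)

lemma trace_lsq_loss_matrix_design:
  assumes "invertible (Hmat psi k (fst w) (snd w))"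
  shows "trace (lsq_loss_matrix \<Sigma> (design w)) = trace (\<Sigma> ** gram_inv w)"
  using trace_lsq_loss_matrix[of "design w" \<Sigma>] assms by (simp add: gram_inv_def Hmat_def)

lemma nn_integral_trace_gram_inv:
  "(\<integral>\<^sup>+ w. ennreal (\<sigma>max\<^sup>2 * trace (\<Sigma> ** gram_inv w)) \<partial>P) =
   ennreal (\<sigma>max\<^sup>2 * trace (\<Sigma> ** mat_expect P gram_inv))"
proof -
  have trace_sum: "trace (\<Sigma> ** X) = (\<Sum>a\<in>UNIV. \<Sum>b\<in>UNIV. \<Sigma> $ a $ b * X $ b $ a)" for X
    by (simp add: trace_def matrix_matrix_mult_def)
  have "(\<integral>\<^sup>+ w. ennreal (\<sigma>max\<^sup>2 * trace (\<Sigma> ** gram_inv w)) \<partial>P) =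
      ennreal (\<integral> w. \<sigma>max\<^sup>2 * trace (\<Sigma> ** gram_inv w) \<partial>P)"
  proof (rule nn_integral_eq_integral)
    show "integrable P (\<lambda>w. \<sigma>max\<^sup>2 * trace (\<Sigma> ** gram_inv w))"
      unfolding trace_sum gram_inv_def using H_int by simp
    show "AE w in P. 0 \<le> \<sigma>max\<^sup>2 * trace (\<Sigma> ** gram_inv w)"
      using H_inv by eventually_elim
        (simp add: trace_lsq_loss_matrix_design[symmetric] trace_lsq_loss_matrix_nonneg[OF Sig])
  qed
  also have "(\<integral> w. \<sigma>max\<^sup>2 * trace (\<Sigma> ** gram_inv w) \<partial>P) =
      \<sigma>max\<^sup>2 * trace (\<Sigma> ** mat_expect P gram_inv)"
    unfolding trace_sum mat_expect_def gram_inv_def using H_int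
    by (simp add: Bochner_Integration.integral_sum integrable_mult_right)
  finally show ?thesis .
qed

definition lsq_estimator :: "(real^'n) \<times> (real^'n^'n) \<times> (real^'n) \<Rightarrow> real^'k" where
  "lsq_estimator = (\<lambda>(x, A, y). gram_inv (x, A) ** transpose (Mmat psi k x A) *v y)"

lemma borel_measurable_lsq_estimator: "lsq_estimator \<in> borel_measurable borel"
  unfolding lsq_estimator_def split_beta' by measurable

lemma risk_lsq_estimator_le:
  assumes noise: "noise_ok P psi k \<sigma>max \<kappa>"
  shows "risk P psi k \<Sigma> lsq_estimator b \<kappa> \<le> ennreal (\<sigma>max\<^sup>2 * trace (\<Sigma> ** mat_expect P gram_inv))"
proof -
  have \<kappa>_measurable: "\<kappa> \<in> P \<rightarrow>\<^sub>M subprob_algebra borel" using noise by (simp add: noise_ok_def)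
  have \<kappa>_sets: "sets (\<kappa> w) = sets borel" if "w \<in> space P" for w
    using measurable_space[OF \<kappa>_measurable that] by (simp add: space_subprob_algebra)
  have "risk P psi k \<Sigma> lsq_estimator b \<kappa> \<le> (\<integral>\<^sup>+ w. ennreal (\<sigma>max\<^sup>2 * trace (\<Sigma> ** gram_inv w)) \<partial>P)"
    unfolding risk_def
  proof (rule nn_integral_mono_AE)
    show "AE w in P.
        (\<integral>\<^sup>+ e. ennreal (sqnorm_S \<Sigma> (lsq_estimator (fst w, snd w,
           mask psi k (design w *v b + e)) - b)) \<partial>\<kappa> w)
        \<le> ennreal (\<sigma>max\<^sup>2 * trace (\<Sigma> ** gram_inv w))"
      using H_inv noise[unfolded noise_ok_def, THEN conjunct2] AE_space
    proof eventually_elim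
      case (elim w)
      have "lsq_estimator (fst w, snd w, mask psi k (design w *v b + e)) - b = lsq (design w) *v e"
        for e using lsq_Mmat_error[OF elim(1)] by (simp add: lsq_estimator_def lsq_design)
      then have "(\<integral>\<^sup>+ e. ennreal (sqnorm_S \<Sigma> (lsq_estimator (fst w, snd w,
           mask psi k (design w *v b + e)) - b)) \<partial>\<kappa> w) =
          (\<integral>\<^sup>+ e. ennreal (sqnorm_S \<Sigma> (lsq (design w) *v e)) \<partial>\<kappa> w)"
        by simp
      also have "\<dots> \<le> ennreal (\<sigma>max\<^sup>2 * trace (lsq_loss_matrix \<Sigma> (design w)))"
        using elim(2)
        by (intro nn_integral_sqnorm_S_lsq_le[OF \<kappa>_sets[OF elim(3)] Sig, where K="{i. psi i = k}"])
          (auto simp: Mmat_row_zero)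
      finally show ?case by (simp add: trace_lsq_loss_matrix_design[OF elim(1)])
    qed
  qed
  then show ?thesis unfolding nn_integral_trace_gram_inv .
qed

lemma worst_case_risk_lsq_estimator_le:
  "worst_case_risk lsq_estimator \<le> ennreal (\<sigma>max\<^sup>2 * trace (\<Sigma> ** mat_expect P gram_inv))"
  by (rule SUP_least) (auto intro: risk_lsq_estimator_le)

end

section \<open>A least favourable noise law\<close>

lemma sum_UNIV_triple: "(\<Sum>u\<in>UNIV. F u) = (\<Sum>a\<in>UNIV. \<Sum>b\<in>UNIV. \<Sum>c\<in>UNIV. F (a, b, c))"
  by (simp add: UNIV_Times_UNIV[symmetric] sum.cartesian_product del: UNIV_Times_UNIV)

context regression_design
begin

lemma measurable_design [measurable (raw)]:
  assumes "f \<in> borel_measurable M"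
  shows "(\<lambda>x. design (f x)) \<in> borel_measurable M"
  using assms by (intro measurable_Mmat measurable_fst_snd_borel)

lemma measurable_lsq_design [measurable (raw)]:
  assumes [measurable]: "f \<in> borel_measurable M"
  shows "(\<lambda>x. lsq (design (f x))) \<in> borel_measurable M"
  unfolding lsq_design by measurable

lemma measurable_reflection_design [measurable (raw)]:
  assumes [measurable]: "f \<in> borel_measurable M"
  shows "(\<lambda>x. reflection (design (f x))) \<in> borel_measurable M"
  unfolding reflection_def by measurable

definition noise_scale :: real where
  "noise_scale = \<sigma>max * sqrt (real CARD('n))"

definition signed_scale :: "bool \<Rightarrow> real" where
  "signed_scale g = (if g then noise_scale else - noise_scale)"

definition hard_atom :: "(real^'n) \<times> (real^'n^'n) \<Rightarrow> 'n \<times> bool \<times> bool \<Rightarrow> real^'n" where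
  "hard_atom w = (\<lambda>(J, g, t). (if t then reflection (design w) else mat 1) *v
                                (signed_scale g *\<^sub>R axis J 1))"

definition atom_law :: "('n \<times> bool \<times> bool) pmf" where
  "atom_law = pmf_of_set UNIV"

definition hard_noise :: "(real^'n) \<times> (real^'n^'n) \<Rightarrow> (real^'n) measure" where
  "hard_noise w = distr (measure_pmf atom_law) borel (hard_atom w)"

lemma hard_atom_nth:
  "hard_atom w (J, g, t) $ i =
     signed_scale g * (if t then reflection (design w) $ i $ J else (if J = i then 1 else 0))"
  by (simp add: hard_atom_def matrix_vector_mult_scaleR matrix_vector_mult_basis column_def mat_def)

lemma sum_hard_atom_nth: "(\<Sum>u\<in>UNIV. hard_atom w u $ i) = 0"
  unfolding sum_UNIV_triple hard_atom_nth by (simp add: UNIV_bool signed_scale_def)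

lemma sum_hard_atom_nth_mult:
  assumes "invertible (Hmat psi k (fst w) (snd w))"
  shows "(\<Sum>u\<in>UNIV. hard_atom w u $ i * hard_atom w u $ j) =
         4 * noise_scale\<^sup>2 * (if i = j then 1 else 0)"
proof -
  let ?R = "reflection (design w)"
  have "?R ** transpose ?R = mat 1"
    using reflection_orthogonal assms by (simp add: Hmat_def)
  then have orth: "(\<Sum>J\<in>UNIV. ?R $ i $ J * ?R $ j $ J) = (if i = j then 1 else 0)"
    by (simp add: vec_eq_iff matrix_matrix_mult_def transpose_def mat_def)
  have "(\<Sum>u\<in>UNIV. hard_atom w u $ i * hard_atom w u $ j) =
      2 * noise_scale\<^sup>2 * ((\<Sum>J\<in>UNIV. (if J = i then 1 else 0) * (if J = j then 1 else 0)) +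
                            (\<Sum>J\<in>UNIV. ?R $ i $ J * ?R $ j $ J))"
    unfolding sum_UNIV_triple hard_atom_nth
    by (simp add: UNIV_bool signed_scale_def power2_eq_square sum.distrib sum_distrib_left
        algebra_simps)
  also have "(\<Sum>J\<in>UNIV. (if J = i then 1 else 0) * (if J = j then 1 else (0::real))) =
      (if i = j then 1 else 0)"
    by (simp add: if_distrib[of "\<lambda>x. x * _"] sum.delta' cong: if_cong)
  finally show ?thesis by (simp add: orth)
qed

lemma integral_hard_noise:
  assumes "f \<in> borel_measurable borel"
  shows "integral\<^sup>L (hard_noise w) f = (\<Sum>u\<in>UNIV. f (hard_atom w u)) / real (4 * CARD('n))"
  unfolding hard_noise_def atom_law_def
  by (subst integral_distr[OF _ assms]) (simp_all add: integral_pmf_of_set card_UNIV_bool)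

lemma nn_integral_hard_noise:
  assumes "f \<in> borel_measurable borel"
  shows "(\<integral>\<^sup>+ e. f e \<partial>hard_noise w) = (\<Sum>u\<in>UNIV. f (hard_atom w u)) / of_nat (4 * CARD('n))"
  unfolding hard_noise_def atom_law_def
  using assms
  by (subst nn_integral_distr) (simp_all add: nn_integral_pmf_of_set card_UNIV_bool mult.commute
      measurable_cong_sets[OF sets_distr refl])

lemma measurable_hard_atom [measurable (raw)]:
  assumes [measurable]: "f \<in> borel_measurable M"
  shows "(\<lambda>x. hard_atom (f x) u) \<in> borel_measurable M"
  by (cases u) (simp add: hard_atom_def, measurable)

lemma hard_noise_measurable: "hard_noise \<in> P \<rightarrow>\<^sub>M subprob_algebra borel"
  unfolding hard_noise_def
proof (rule measurable_distr2[where M="measure_pmf atom_law"])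
  have "(\<lambda>p. hard_atom (fst p) (snd p)) \<in> measurable (P \<Otimes>\<^sub>M measure_pmf atom_law) borel"
  proof (rule measurable_compose_countable'[where f="\<lambda>u p. hard_atom (fst p) u" and g=snd and I=UNIV])
    fix u :: "'n \<times> bool \<times> bool"
    have "(\<lambda>w. hard_atom w u) \<in> borel_measurable P"
      unfolding measurable_cong_sets[OF P_borel refl] by measurable
    then show "(\<lambda>p. hard_atom (fst p) u) \<in> borel_measurable (P \<Otimes>\<^sub>M measure_pmf atom_law)"
      by (rule measurable_compose[OF measurable_fst])
  qed (simp_all add: measurable_compose[OF measurable_snd])
  then show "(\<lambda>(w, u). hard_atom w u) \<in> measurable (P \<Otimes>\<^sub>M measure_pmf atom_law) borel"
    by (simp add: case_prod_beta')
  show "(\<lambda>x. measure_pmf atom_law) \<in> measurable P (subprob_algebra (measure_pmf atom_law))"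
    by (rule measurable_const)
      (simp add: space_subprob_algebra prob_space_imp_subprob_space prob_space_measure_pmf)
qed

lemma noise_ok_hard_noise: "noise_ok P psi k \<sigma>max hard_noise"
  unfolding noise_ok_def
proof (intro conjI hard_noise_measurable)
  show "AE w in P. prob_space (hard_noise w) \<and>
        (\<forall>i. psi i = k \<longrightarrow>
            integrable (hard_noise w) (\<lambda>e. (e $ i)\<^sup>2) \<and>
            integral\<^sup>L (hard_noise w) (\<lambda>e. e $ i) = 0 \<and>
            integral\<^sup>L (hard_noise w) (\<lambda>e. (e $ i)\<^sup>2) \<le> \<sigma>max\<^sup>2) \<and>
        (\<forall>i j. psi i = k \<longrightarrow> psi j = k \<longrightarrow> i \<noteq> j \<longrightarrow>
            integral\<^sup>L (hard_noise w) (\<lambda>e. e $ i * e $ j) = 0)"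
    using H_inv
  proof eventually_elim
    case (elim w)
    have "noise_scale\<^sup>2 = \<sigma>max\<^sup>2 * real CARD('n)"
      by (simp add: noise_scale_def power_mult_distrib)
    then have "integral\<^sup>L (hard_noise w) (\<lambda>e. (e $ i)\<^sup>2) = \<sigma>max\<^sup>2" for i
      by (simp add: integral_hard_noise power2_eq_square sum_hard_atom_nth_mult[OF elim])
    moreover have "prob_space (hard_noise w)"
      unfolding hard_noise_def
      by (rule prob_space.prob_space_distr) (simp_all add: prob_space_measure_pmf)
    moreover have "integrable (hard_noise w) (\<lambda>e. (e $ i)\<^sup>2)" for i
      unfolding hard_noise_def atom_law_def
      by (subst integrable_distr_eq) (simp_all add: integrable_measure_pmf_finite)
    ultimately show ?case
      by (simp add: integral_hard_noise sum_hard_atom_nth sum_hard_atom_nth_mult[OF elim])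
  qed
qed

end

section \<open>Averaging over a large cube\<close>

definition cube :: "real \<Rightarrow> (real^'k) set" where
  "cube r = cbox (\<chi> j. - r) (\<chi> j. r)"

lemma cube_borel [measurable]: "cube r \<in> sets borel"
  unfolding cube_def by simp

lemma emeasure_cube:
  assumes "r \<ge> 0"
  shows "emeasure lborel (cube r :: (real^'k) set) = ennreal ((2 * r) ^ CARD('k))"
proof -
  have "\<And>b::real^'k. b \<in> Basis \<Longrightarrow> ((\<chi> j. r) - (\<chi> j. - r)) \<bullet> b = 2 * r"
    "\<And>b::real^'k. b \<in> Basis \<Longrightarrow> (\<chi> j. - r) \<bullet> b \<le> (\<chi> j. r) \<bullet> b"
    using assms by (auto simp: Basis_vec_def inner_axis)
  then have "emeasure lborel (cube r :: (real^'k) set) = ennreal (2 ^ CARD('k) * r ^ CARD('k))"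
    unfolding cube_def emeasure_lborel_cbox_eq by (simp add: prod_constant)
  then show ?thesis by (simp add: power_mult_distrib)
qed

lemma cube_shrink_subset:
  fixes d :: "real^'k"
  assumes "(\<Sum>j\<in>UNIV. \<bar>d $ j\<bar>) \<le> D" "D \<le> T"
  shows "cube (T - D) \<subseteq> {c. c \<in> cube T \<and> d + c \<in> cube T}"
proof
  fix c :: "real^'k" assume "c \<in> cube (T - D)"
  then have "\<forall>i. - (T - D) \<le> c $ i \<and> c $ i \<le> T - D" by (simp add: cube_def mem_box_cart)
  then have c: "\<bar>c $ j\<bar> \<le> T - D" for j unfolding abs_le_iff by (metis minus_le_iff)
  have d: "\<bar>d $ j\<bar> \<le> D" for j
    using member_le_sum[of j UNIV "\<lambda>j. \<bar>d $ j\<bar>"] assms(1) by auto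
  have "- T \<le> c $ j \<and> c $ j \<le> T \<and> - T \<le> d $ j + c $ j \<and> d $ j + c $ j \<le> T" for j
    using c[of j] d[of j] unfolding abs_le_iff by linarith
  then show "c \<in> {c. c \<in> cube T \<and> d + c \<in> cube T}"
    by (simp add: cube_def mem_box_cart)
qed

lemma emeasure_cube_overlap_ge:
  fixes d :: "real^'k"
  assumes "(\<Sum>j\<in>UNIV. \<bar>d $ j\<bar>) \<le> D"
  shows "ennreal ((2 * max 0 (T - D)) ^ CARD('k)) \<le> emeasure lborel {c. c \<in> cube T \<and> d + c \<in> cube T}"
proof (cases "D \<le> T")
  case True
  then have "ennreal ((2 * max 0 (T - D)) ^ CARD('k)) = emeasure lborel (cube (T - D) :: (real^'k) set)"
    by (simp add: emeasure_cube)
  also have "\<dots> \<le> emeasure lborel {c. c \<in> cube T \<and> d + c \<in> cube T}"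
    by (rule emeasure_mono[OF cube_shrink_subset[OF assms True]]) measurable
  finally show ?thesis .
qed (simp add: power_0_left)

text \<open>Two-point bound: after the substitution c = b - 2 \<xi>, the estimate h c has to serve both
c and c + 2 \<xi>.\<close>
lemma shifted_pair_loss_ge:
  fixes h :: "real^'k \<Rightarrow> real^'k"
  assumes [measurable]: "h \<in> borel_measurable borel" "Q \<in> sets borel" and S: "pos_def S"
  shows "ennreal (2 * sqnorm_S S \<xi>) * emeasure lborel {c. c \<in> Q \<and> 2 *\<^sub>R \<xi> + c \<in> Q}
    \<le> (\<integral>\<^sup>+ b. indicator Q b * ennreal (sqnorm_S S (h b - b)) \<partial>lborel)
      + (\<integral>\<^sup>+ b. indicator Q b * ennreal (sqnorm_S S (h (b - 2 *\<^sub>R \<xi>) - b)) \<partial>lborel)"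
proof -
  define d where "d = 2 *\<^sub>R \<xi>"
  have shift: "(\<integral>\<^sup>+ b. indicator Q b * ennreal (sqnorm_S S (h (b - d) - b)) \<partial>lborel)
      = (\<integral>\<^sup>+ c. indicator Q (d + c) * ennreal (sqnorm_S S (h c - (d + c))) \<partial>lborel)"
    by (subst lborel_distr_plus[of d, symmetric], subst nn_integral_distr) simp_all
  have "(\<integral>\<^sup>+ c. ennreal (2 * sqnorm_S S \<xi>) * indicator {c. c \<in> Q \<and> d + c \<in> Q} c \<partial>lborel)
     \<le> (\<integral>\<^sup>+ c. indicator Q c * ennreal (sqnorm_S S (h c - c)) +
            indicator Q (d + c) * ennreal (sqnorm_S S (h c - (d + c))) \<partial>lborel)"
  proof (rule nn_integral_mono)
    fix c
    have "2 * sqnorm_S S \<xi> \<le> sqnorm_S S (h c - c) + sqnorm_S S (h c - (d + c))"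
      using sqnorm_S_parallelogram[of S "h c - c" \<xi>] sqnorm_S_nonneg[OF S, of "h c - c - \<xi>"]
      by (simp add: d_def algebra_simps)
    then have "ennreal (2 * sqnorm_S S \<xi>)
        \<le> ennreal (sqnorm_S S (h c - c)) + ennreal (sqnorm_S S (h c - (d + c)))"
      using sqnorm_S_nonneg[OF S] by (simp add: ennreal_leI flip: ennreal_plus)
    then show "ennreal (2 * sqnorm_S S \<xi>) * indicator {c. c \<in> Q \<and> d + c \<in> Q} c
      \<le> indicator Q c * ennreal (sqnorm_S S (h c - c)) +
        indicator Q (d + c) * ennreal (sqnorm_S S (h c - (d + c)))"
      by (cases "c \<in> Q \<and> d + c \<in> Q") auto
  qed
  also have "\<dots> = (\<integral>\<^sup>+ c. indicator Q c * ennreal (sqnorm_S S (h c - c)) \<partial>lborel)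
      + (\<integral>\<^sup>+ c. indicator Q (d + c) * ennreal (sqnorm_S S (h c - (d + c))) \<partial>lborel)"
    by (rule nn_integral_add) measurable
  finally show ?thesis
    using shift unfolding d_def by (subst (asm) nn_integral_cmult_indicator) (simp_all, measurable)
qed

lemma overlap_ratio_mono:
  fixes D T1 T2 :: real
  assumes "0 < T1" "T1 \<le> T2" "0 \<le> D"
  shows "max 0 (T1 - D) / T1 \<le> max 0 (T2 - D) / T2"
proof (cases "T1 \<le> D")
  case False
  with assms have "max 0 (T1 - D) / T1 = 1 - D / T1" "max 0 (T2 - D) / T2 = 1 - D / T2"
    by (simp_all add: field_simps)
  moreover have "D / T2 \<le> D / T1" using assms by (intro divide_left_mono) auto
  ultimately show ?thesis by simp
qed (use assms in simp)

lemma SUP_overlap_ratio_power: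
  fixes D :: real
  assumes D: "0 \<le> D"
  shows "(SUP m. ennreal ((max 0 (real (Suc m) - D) / real (Suc m)) ^ K)) = 1"
proof -
  define f where "f m = (max 0 (real (Suc m) - D) / real (Suc m)) ^ K" for m
  have "incseq (\<lambda>m. ennreal (f m))"
    unfolding f_def using D
    by (intro incseq_SucI ennreal_leI power_mono overlap_ratio_mono) auto
  then have lim_SUP: "(\<lambda>m. ennreal (f m)) \<longlonglongrightarrow> (SUP m. ennreal (f m))" by (rule LIMSEQ_SUP)
  have "\<forall>\<^sub>F m in sequentially. (1 - D * inverse (real (Suc m))) ^ K = f m"
  proof (rule eventually_sequentiallyI[of "nat \<lceil>D\<rceil>"])
    fix m assume "nat \<lceil>D\<rceil> \<le> m"
    then have "D < real (Suc m)" by linarith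
    then show "(1 - D * inverse (real (Suc m))) ^ K = f m"
      unfolding f_def by (simp add: field_simps)
  qed
  moreover have "(\<lambda>m. (1 - D * inverse (real (Suc m))) ^ K) \<longlonglongrightarrow> (1 - D * 0) ^ K"
    by (intro tendsto_intros LIMSEQ_inverse_real_of_nat)
  ultimately have "(\<lambda>m. ennreal (f m)) \<longlonglongrightarrow> ennreal 1"
    by (intro tendsto_ennrealI) (simp add: tendsto_cong)
  with lim_SUP show ?thesis unfolding f_def using LIMSEQ_unique by fastforce
qed

section \<open>The lower bound\<close>

context regression_design
begin

definition lsq_risk :: "(real^'n) \<times> (real^'n^'n) \<Rightarrow> real" where
  "lsq_risk w = \<sigma>max\<^sup>2 * trace (lsq_loss_matrix \<Sigma> (design w))"

definition atom_loss ::
  "((real^'n) \<times> (real^'n^'n) \<times> (real^'n) \<Rightarrow> real^'k) \<Rightarrow> (real^'n) \<times> (real^'n^'n) \<Rightarrow> real^'k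
     \<Rightarrow> 'n \<times> bool \<times> bool \<Rightarrow> ennreal" where
  "atom_loss est w b u =
     ennreal (sqnorm_S \<Sigma> (est (fst w, snd w, mask psi k (design w *v b + hard_atom w u)) - b))"

text \<open>An upper bound on the l1 norms of the shifts 2 lsq(M) v of the two-point argument.\<close>
definition shift_bound :: "(real^'n) \<times> (real^'n^'n) \<Rightarrow> real" where
  "shift_bound w = (\<Sum>J\<in>UNIV. \<Sum>j\<in>UNIV. 2 * \<bar>noise_scale\<bar> * \<bar>lsq (design w) $ j $ J\<bar>)"

definition overlap_ratio :: "real \<Rightarrow> (real^'n) \<times> (real^'n^'n) \<Rightarrow> real" where
  "overlap_ratio T w = (max 0 (T - shift_bound w) / T) ^ CARD('k)"

lemma lsq_risk_nonneg: "lsq_risk w \<ge> 0"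
  unfolding lsq_risk_def by (simp add: trace_lsq_loss_matrix_nonneg[OF Sig])

lemma shift_bound_nonneg: "shift_bound w \<ge> 0"
  unfolding shift_bound_def by (intro sum_nonneg) auto

lemma measurable_overlap_ratio_lsq_risk:
  "(\<lambda>w. ennreal (overlap_ratio T w * lsq_risk w)) \<in> borel_measurable P"
proof -
  have "(\<lambda>w. ennreal (overlap_ratio T w * lsq_risk w)) \<in> borel_measurable borel"
    unfolding overlap_ratio_def lsq_risk_def shift_bound_def lsq_loss_matrix_def by measurable
  then show ?thesis by (simp add: measurable_cong_sets[OF P_borel refl])
qed

lemma atom_pair_loss_ge:
  assumes [measurable]: "est \<in> borel_measurable borel"
  shows "ennreal (2 * noise_scale\<^sup>2 * lsq_loss_matrix \<Sigma> (design w) $ J $ J) *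
           ennreal ((2 * max 0 (T - shift_bound w)) ^ CARD('k))
    \<le> (\<integral>\<^sup>+ b. indicator (cube T) b * atom_loss est w b (J, g, False) \<partial>lborel)
      + (\<integral>\<^sup>+ b. indicator (cube T) b * atom_loss est w b (J, g, True) \<partial>lborel)"
proof -
  define v where "v = signed_scale g *\<^sub>R axis J (1::real)"
  define \<xi> where "\<xi> = lsq (design w) *v v"
  define h where "h b = est (fst w, snd w, mask psi k (design w *v b + v))" for b
  have [measurable]: "h \<in> borel_measurable borel" unfolding h_def by measurable
  have \<xi>_nth: "\<xi> $ j = signed_scale g * lsq (design w) $ j $ J" for j
    by (simp add: \<xi>_def v_def matrix_vector_mult_scaleR matrix_vector_mult_basis column_def)
  have "(\<Sum>j\<in>UNIV. \<bar>(2 *\<^sub>R \<xi>) $ j\<bar>) = (\<Sum>j\<in>UNIV. 2 * \<bar>noise_scale\<bar> * \<bar>lsq (design w) $ j $ J\<bar>)"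
    by (simp add: \<xi>_nth signed_scale_def abs_mult mult.assoc)
  also have "\<dots> \<le> shift_bound w"
    unfolding shift_bound_def
    by (rule member_le_sum[where f="\<lambda>J. \<Sum>j\<in>UNIV. 2 * \<bar>noise_scale\<bar> * \<bar>lsq (design w) $ j $ J\<bar>"])
      (auto intro!: sum_nonneg)
  finally have "ennreal ((2 * max 0 (T - shift_bound w)) ^ CARD('k))
      \<le> emeasure lborel {c. c \<in> cube T \<and> 2 *\<^sub>R \<xi> + c \<in> cube T}"
    by (rule emeasure_cube_overlap_ge)
  moreover have "sqnorm_S \<Sigma> \<xi> = noise_scale\<^sup>2 * lsq_loss_matrix \<Sigma> (design w) $ J $ J"
    by (simp add: \<xi>_def v_def sqnorm_S_lsq_axis signed_scale_def)
  ultimately have "ennreal (2 * noise_scale\<^sup>2 * lsq_loss_matrix \<Sigma> (design w) $ J $ J) *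
        ennreal ((2 * max 0 (T - shift_bound w)) ^ CARD('k))
      \<le> ennreal (2 * sqnorm_S \<Sigma> \<xi>) * emeasure lborel {c. c \<in> cube T \<and> 2 *\<^sub>R \<xi> + c \<in> cube T}"
    by (simp add: mult.assoc mult_left_mono)
  also have "\<dots> \<le> (\<integral>\<^sup>+ b. indicator (cube T) b * ennreal (sqnorm_S \<Sigma> (h b - b)) \<partial>lborel)
      + (\<integral>\<^sup>+ b. indicator (cube T) b * ennreal (sqnorm_S \<Sigma> (h (b - 2 *\<^sub>R \<xi>) - b)) \<partial>lborel)"
    by (rule shifted_pair_loss_ge[OF _ cube_borel Sig]) measurable
  also have "\<dots> = (\<integral>\<^sup>+ b. indicator (cube T) b * atom_loss est w b (J, g, False) \<partial>lborel)
      + (\<integral>\<^sup>+ b. indicator (cube T) b * atom_loss est w b (J, g, True) \<partial>lborel)"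
    by (simp add: atom_loss_def hard_atom_def h_def v_def \<xi>_def reflection_shift)
  finally show ?thesis .
qed

lemma cube_integral_atom_losses_ge:
  assumes [measurable]: "est \<in> borel_measurable borel"
  shows "ennreal ((2 * max 0 (T - shift_bound w)) ^ CARD('k)) *
           ennreal (4 * noise_scale\<^sup>2 * trace (lsq_loss_matrix \<Sigma> (design w)))
    \<le> (\<integral>\<^sup>+ b. indicator (cube T) b * (\<Sum>u\<in>UNIV. atom_loss est w b u) \<partial>lborel)"
proof -
  let ?V = "(2 * max 0 (T - shift_bound w)) ^ CARD('k)"
  let ?c = "\<lambda>J. 2 * noise_scale\<^sup>2 * lsq_loss_matrix \<Sigma> (design w) $ J $ J"
  let ?I = "\<lambda>u. \<integral>\<^sup>+ b. indicator (cube T) b * atom_loss est w b u \<partial>lborel"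
  have c_nonneg: "0 \<le> ?c J" for J by (simp add: lsq_loss_matrix_diag_nonneg[OF Sig])
  then have cV_nonneg: "0 \<le> ?c J * ?V" for J by simp
  have atom_loss_measurable: "(\<lambda>b. indicator (cube T) b * atom_loss est w b u) \<in> borel_measurable lborel"
    for u unfolding atom_loss_def by measurable
  have "(\<Sum>J\<in>UNIV. \<Sum>g\<in>(UNIV::bool set). ?c J * ?V) =
      ?V * (4 * noise_scale\<^sup>2 * trace (lsq_loss_matrix \<Sigma> (design w)))"
    by (simp add: UNIV_bool trace_def sum_distrib_left sum_distrib_right algebra_simps)
  then have "ennreal ?V * ennreal (4 * noise_scale\<^sup>2 * trace (lsq_loss_matrix \<Sigma> (design w))) =
      ennreal (\<Sum>J\<in>UNIV. \<Sum>g\<in>(UNIV::bool set). ?c J * ?V)"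
    by (simp add: ennreal_mult[symmetric] trace_lsq_loss_matrix_nonneg[OF Sig])
  also have "\<dots> = (\<Sum>J\<in>UNIV. ennreal (\<Sum>g\<in>(UNIV::bool set). ?c J * ?V))"
    by (rule sum_ennreal[symmetric]) (intro sum_nonneg cV_nonneg)
  also have "\<dots> = (\<Sum>J\<in>UNIV. \<Sum>g\<in>(UNIV::bool set). ennreal (?c J * ?V))"
    by (intro sum.cong refl sum_ennreal[symmetric] cV_nonneg)
  also have "\<dots> = (\<Sum>J\<in>UNIV. \<Sum>g\<in>(UNIV::bool set). ennreal (?c J) * ennreal ?V)"
    by (intro sum.cong refl ennreal_mult c_nonneg) simp
  also have "\<dots> \<le> (\<Sum>J\<in>UNIV. \<Sum>g\<in>UNIV. ?I (J, g, False) + ?I (J, g, True))"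
    by (intro sum_mono atom_pair_loss_ge) simp
  also have "\<dots> = (\<Sum>u\<in>UNIV. ?I u)"
    unfolding sum_UNIV_triple by (simp add: UNIV_bool add.commute)
  also have "\<dots> = (\<integral>\<^sup>+ b. indicator (cube T) b * (\<Sum>u\<in>UNIV. atom_loss est w b u) \<partial>lborel)"
    using atom_loss_measurable by (simp only: sum_distrib_left nn_integral_sum)
  finally show ?thesis .
qed

lemma risk_hard_noise:
  assumes [measurable]: "est \<in> borel_measurable borel"
  shows "risk P psi k \<Sigma> est b hard_noise =
         (\<integral>\<^sup>+ w. (\<Sum>u\<in>UNIV. atom_loss est w b u) / of_nat (4 * CARD('n)) \<partial>P)"
  unfolding risk_def by (intro nn_integral_cong) (simp add: nn_integral_hard_noise atom_loss_def)

lemma cube_integral_risk_hard_noise: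
  assumes [measurable]: "est \<in> borel_measurable borel"
  shows "(\<integral>\<^sup>+ w. (\<integral>\<^sup>+ b. indicator (cube T) b *
             ((\<Sum>u\<in>UNIV. atom_loss est w b u) / of_nat (4 * CARD('n))) \<partial>lborel) \<partial>P)
       = (\<integral>\<^sup>+ b. indicator (cube T) b * risk P psi k \<Sigma> est b hard_noise \<partial>lborel)"
proof -
  interpret prob_space P by (rule P_prob)
  interpret pair_sigma_finite lborel P ..
  have "sets (lborel \<Otimes>\<^sub>M P) =
      sets ((borel :: (real^'k) measure) \<Otimes>\<^sub>M (borel :: ((real^'n) \<times> (real^'n^'n)) measure))"
    by (rule sets_pair_measure_cong) (simp_all add: P_borel)
  then have sets_eq: "sets (lborel \<Otimes>\<^sub>M P) = sets (borel :: ((real^'k) \<times> (real^'n) \<times> (real^'n^'n)) measure)"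
    unfolding borel_prod .
  have "(\<lambda>z. indicator (cube T) (fst z) *
        ((\<Sum>u\<in>UNIV. atom_loss est (snd z) (fst z) u) / of_nat (4 * CARD('n))))
      \<in> borel_measurable (borel :: ((real^'k) \<times> (real^'n) \<times> (real^'n^'n)) measure)"
    unfolding atom_loss_def by measurable
  then have joint: "(\<lambda>(b, w). indicator (cube T) b *
        ((\<Sum>u\<in>UNIV. atom_loss est w b u) / of_nat (4 * CARD('n)))) \<in> borel_measurable (lborel \<Otimes>\<^sub>M P)"
    by (simp add: measurable_cong_sets[OF sets_eq refl] case_prod_beta')
  have "(\<lambda>w. (\<Sum>u\<in>UNIV. atom_loss est w b u) / of_nat (4 * CARD('n))) \<in> borel_measurable borel"
    for b unfolding atom_loss_def by measurable
  then have section_w: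
    "(\<lambda>w. (\<Sum>u\<in>UNIV. atom_loss est w b u) / of_nat (4 * CARD('n))) \<in> borel_measurable P" for b
    by (simp add: measurable_cong_sets[OF P_borel refl])
  have "(\<integral>\<^sup>+ w. (\<integral>\<^sup>+ b. indicator (cube T) b *
             ((\<Sum>u\<in>UNIV. atom_loss est w b u) / of_nat (4 * CARD('n))) \<partial>lborel) \<partial>P)
     = (\<integral>\<^sup>+ b. (\<integral>\<^sup>+ w. indicator (cube T) b *
             ((\<Sum>u\<in>UNIV. atom_loss est w b u) / of_nat (4 * CARD('n))) \<partial>P) \<partial>lborel)"
    by (rule Fubini'[OF joint])
  also have "\<dots> = (\<integral>\<^sup>+ b. indicator (cube T) b * risk P psi k \<Sigma> est b hard_noise \<partial>lborel)"
    by (intro nn_integral_cong)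
      (subst nn_integral_cmult[OF section_w], simp add: risk_hard_noise)
  finally show ?thesis .
qed

lemma overlap_weighted_lsq_risk_le_cube_average:
  assumes [measurable]: "est \<in> borel_measurable borel"
  shows "ennreal ((2 * max 0 (T - shift_bound w)) ^ CARD('k) * lsq_risk w)
    \<le> (\<integral>\<^sup>+ b. indicator (cube T) b *
          ((\<Sum>u\<in>UNIV. atom_loss est w b u) / of_nat (4 * CARD('n))) \<partial>lborel)"
proof -
  let ?V = "(2 * max 0 (T - shift_bound w)) ^ CARD('k)"
  let ?t = "trace (lsq_loss_matrix \<Sigma> (design w))"
  let ?N = "of_nat (4 * CARD('n)) :: ennreal"
  have t_nonneg: "?t \<ge> 0" by (rule trace_lsq_loss_matrix_nonneg[OF Sig])
  have "ennreal (?V * lsq_risk w) = ennreal (?V * (4 * noise_scale\<^sup>2 * ?t) / real (4 * CARD('n)))"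
    by (simp add: lsq_risk_def noise_scale_def power_mult_distrib mult.assoc)
  also have "\<dots> = ennreal (?V * (4 * noise_scale\<^sup>2 * ?t)) / ennreal (real (4 * CARD('n)))"
    by (rule divide_ennreal[symmetric]) (use t_nonneg in simp_all)
  also have "\<dots> = ennreal ?V * ennreal (4 * noise_scale\<^sup>2 * ?t) / ?N"
    using t_nonneg by (simp add: ennreal_mult ennreal_of_nat_eq_real_of_nat)
  also have "\<dots> \<le> (\<integral>\<^sup>+ b. indicator (cube T) b * (\<Sum>u\<in>UNIV. atom_loss est w b u) \<partial>lborel) / ?N"
    by (rule divide_right_mono_ennreal[OF cube_integral_atom_losses_ge]) measurable
  also have "\<dots> = (\<integral>\<^sup>+ b. indicator (cube T) b * (\<Sum>u\<in>UNIV. atom_loss est w b u) / ?N \<partial>lborel)"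
    by (rule nn_integral_divide[symmetric]) (unfold atom_loss_def, measurable)
  finally show ?thesis by (simp add: ennreal_times_divide)
qed

lemma overlap_weighted_lsq_risk_le:
  assumes [measurable]: "est \<in> borel_measurable borel" and T: "T > 0"
  shows "(\<integral>\<^sup>+ w. ennreal ((2 * max 0 (T - shift_bound w)) ^ CARD('k) * lsq_risk w) \<partial>P)
     \<le> worst_case_risk est * ennreal ((2 * T) ^ CARD('k))"
proof -
  have "(\<integral>\<^sup>+ w. ennreal ((2 * max 0 (T - shift_bound w)) ^ CARD('k) * lsq_risk w) \<partial>P)
      \<le> (\<integral>\<^sup>+ w. (\<integral>\<^sup>+ b. indicator (cube T) b *
           ((\<Sum>u\<in>UNIV. atom_loss est w b u) / of_nat (4 * CARD('n))) \<partial>lborel) \<partial>P)"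
    by (intro nn_integral_mono overlap_weighted_lsq_risk_le_cube_average) measurable
  also have "\<dots> = (\<integral>\<^sup>+ b. indicator (cube T) b * risk P psi k \<Sigma> est b hard_noise \<partial>lborel)"
    by (rule cube_integral_risk_hard_noise) measurable
  also have "\<dots> \<le> (\<integral>\<^sup>+ b. indicator (cube T) (b :: real^'k) * worst_case_risk est \<partial>lborel)"
  proof (rule nn_integral_mono)
    fix b
    have "risk P psi k \<Sigma> est b hard_noise \<le> worst_case_risk est"
      using noise_ok_hard_noise by (intro SUP_upper2[of "(b, hard_noise)"]) auto
    then show "indicator (cube T) b * risk P psi k \<Sigma> est b hard_noise
        \<le> indicator (cube T) b * worst_case_risk est"
      by (rule mult_left_mono) simp
  qed
  also have "\<dots> = worst_case_risk est * ennreal ((2 * T) ^ CARD('k))"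
    using T by (simp add: mult.commute[of "indicator _ _"] nn_integral_cmult_indicator emeasure_cube)
  finally show ?thesis .
qed

lemma overlap_ratio_weighted_lsq_risk_le:
  assumes [measurable]: "est \<in> borel_measurable borel" and T: "T > 0"
  shows "(\<integral>\<^sup>+ w. ennreal (overlap_ratio T w * lsq_risk w) \<partial>P) \<le> worst_case_risk est"
proof -
  let ?c = "ennreal ((2 * T) ^ CARD('k))"
  have c_nonneg: "0 \<le> (2 * T) ^ CARD('k)" using T by simp
  have scale: "(2 * max 0 (T - shift_bound w)) ^ CARD('k) * lsq_risk w =
      (2 * T) ^ CARD('k) * (overlap_ratio T w * lsq_risk w)" for w
  proof -
    have "2 * max 0 (T - shift_bound w) = 2 * T * (max 0 (T - shift_bound w) / T)" using T by simp
    then show ?thesis by (simp only: overlap_ratio_def power_mult_distrib mult.assoc)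
  qed
  have "?c * (\<integral>\<^sup>+ w. ennreal (overlap_ratio T w * lsq_risk w) \<partial>P) =
      (\<integral>\<^sup>+ w. ?c * ennreal (overlap_ratio T w * lsq_risk w) \<partial>P)"
    by (rule nn_integral_cmult[OF measurable_overlap_ratio_lsq_risk, symmetric])
  also have "\<dots> = (\<integral>\<^sup>+ w. ennreal ((2 * max 0 (T - shift_bound w)) ^ CARD('k) * lsq_risk w) \<partial>P)"
    by (intro nn_integral_cong) (simp only: scale ennreal_mult'[OF c_nonneg])
  also have "\<dots> \<le> ?c * worst_case_risk est"
    using overlap_weighted_lsq_risk_le[OF assms] by (simp add: mult.commute)
  finally show ?thesis
    using T ennreal_mult_le_mult_iff[of ?c] by simp
qed

lemma nn_integral_lsq_risk_le:
  assumes [measurable]: "est \<in> borel_measurable borel"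
  shows "(\<integral>\<^sup>+ w. ennreal (lsq_risk w) \<partial>P) \<le> worst_case_risk est"
proof -
  define g where "g m w = ennreal (overlap_ratio (real (Suc m)) w * lsq_risk w)" for m w
  have incseq: "incseq g"
    unfolding g_def overlap_ratio_def
    by (intro incseq_SucI le_funI ennreal_leI mult_right_mono lsq_risk_nonneg power_mono
        overlap_ratio_mono shift_bound_nonneg) auto
  have SUP_g: "(SUP m. g m w) = ennreal (lsq_risk w)" for w
  proof -
    have "(SUP m. g m w) = (SUP m. ennreal (overlap_ratio (real (Suc m)) w)) * ennreal (lsq_risk w)"
      unfolding g_def using lsq_risk_nonneg
      by (simp add: ennreal_mult'' overlap_ratio_def SUP_mult_right_ennreal)
    also have "(SUP m. ennreal (overlap_ratio (real (Suc m)) w)) = 1"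
      unfolding overlap_ratio_def by (rule SUP_overlap_ratio_power[OF shift_bound_nonneg])
    finally show ?thesis by simp
  qed
  have "(\<integral>\<^sup>+ w. ennreal (lsq_risk w) \<partial>P) = (\<integral>\<^sup>+ w. (SUP m. g m w) \<partial>P)"
    by (simp add: SUP_g)
  also have "\<dots> = (SUP m. \<integral>\<^sup>+ w. g m w \<partial>P)"
    unfolding g_def by (rule nn_integral_monotone_convergence_SUP[OF incseq[unfolded g_def]])
      (rule measurable_overlap_ratio_lsq_risk)
  also have "\<dots> \<le> worst_case_risk est"
    unfolding g_def by (intro SUP_least overlap_ratio_weighted_lsq_risk_le) simp_all
  finally show ?thesis .
qed

lemma worst_case_risk_ge:
  assumes "est \<in> borel_measurable borel"
  shows "ennreal (\<sigma>max\<^sup>2 * trace (\<Sigma> ** mat_expect P gram_inv)) \<le> worst_case_risk est"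
proof -
  have "(\<integral>\<^sup>+ w. ennreal (\<sigma>max\<^sup>2 * trace (\<Sigma> ** gram_inv w)) \<partial>P) = (\<integral>\<^sup>+ w. ennreal (lsq_risk w) \<partial>P)"
    using H_inv
    by (intro nn_integral_cong_AE) (auto simp: lsq_risk_def trace_lsq_loss_matrix_design)
  then show ?thesis
    using nn_integral_lsq_risk_le[OF assms] by (simp add: nn_integral_trace_gram_inv)
qed

end

theorem theorem9:
  fixes P :: "((real^'n) \<times> (real^'n^'n)) measure"
    and psi :: "'n::finite \<Rightarrow> 'k::finite"
    and k :: 'k
    and \<Sigma> :: "real^'k^'k"
    and \<sigma>max :: real
  assumes n2: "CARD('n) \<ge> 2"
    and P_prob: "prob_space P"
    and P_borel: "sets P = sets borel"
    and A_adj: "AE w in P. (\<forall>i j. snd w $ i $ j \<in> {0, 1} \<and> snd w $ i $ j = snd w $ j $ i)"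
    and H_inv: "AE w in P. invertible (Hmat psi k (fst w) (snd w))"
    and H_int: "\<And>i j. integrable P (\<lambda>w. matrix_inv (Hmat psi k (fst w) (snd w)) $ i $ j)"
    and Sig: "pos_def \<Sigma>"
    and sig_pos: "\<sigma>max > 0"
  shows "(INF est \<in> borel_measurable borel.
            SUP (b, \<kappa>) \<in> {(b, \<kappa>). noise_ok P psi k \<sigma>max \<kappa>}.
              risk P psi k \<Sigma> est b \<kappa>)
         = ennreal (\<sigma>max\<^sup>2 * trace (\<Sigma> ** mat_expect P (\<lambda>w. matrix_inv (Hmat psi k (fst w) (snd w)))))"
proof -
  interpret regression_design P psi k \<Sigma> \<sigma>max
    by (simp add: regression_design_def P_prob P_borel H_inv H_int Sig)
  have "(\<lambda>w. matrix_inv (Hmat psi k (fst w) (snd w))) = gram_inv"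
    by (simp add: fun_eq_iff gram_inv_def)
  moreover have "(INF est \<in> borel_measurable borel. worst_case_risk est)
      \<le> ennreal (\<sigma>max\<^sup>2 * trace (\<Sigma> ** mat_expect P gram_inv))"
    by (rule INF_lower2[OF borel_measurable_lsq_estimator]) (rule worst_case_risk_lsq_estimator_le)
  moreover have "ennreal (\<sigma>max\<^sup>2 * trace (\<Sigma> ** mat_expect P gram_inv))
      \<le> (INF est \<in> borel_measurable borel. worst_case_risk est)"
    by (rule INF_greatest) (rule worst_case_risk_ge)
  ultimately show ?thesis by simp
qed

end
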